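(* Let $A$ be a set, $T=A^*$, $Y$ a semilattice and $\cdot$ a left partial action of $T$ on $Y$ satisfying axioms (A), (B), (C) which is a partially defined action, with reverse right partial action $\circ$. Let $\sim$ and $\approx$ be the equivalence relations on $Y\times T$ defined in the context. Then: (1) every $\sim$-class $B$ contains a unique element $(x,w)$ (called canonical) with $|w|=\min\{|u|\colon (y,u)\in B\}$; moreover, if $(x,w)$ is canonical and $(y,u)\sim(x,w)$, then $x\circ t$ is defined and $(y,u)=(x\circ t,wt)$ for some $t\in A^*$; (2) the equivalences $\sim$ and $\approx$ on $Y\times T$ coincide.
   Context: $A^*$ is the free monoid on $A$ and $|w|$ is the length of the word $w$ (the empty word has length $0$). A left partial action of $T$ on $Y$: $1\cdot y=y$ always defined; if $t\cdot y$, $s\cdot(t\cdot y)$ are defined then $(st)\cdot y$ is defined and equals it. With $\varphi_t\colon y\mapsto t\cdot y$: (A) $\mathrm{dom}\varphi_t$, $\mathrm{ran}\varphi_t$ are order ideals; (B) $\varphi_t$ is an order-isomorphism between them; (C) $\mathrm{dom}\varphi_t\ne\varnothing$. It is a partially defined action if $(st)\cdot x$ is defined iff $t\cdot x$ and $s\cdot(t\cdot x)$ are defined. Reverse: $y\circ t$ defined iff $y\in\mathrm{ran}\varphi_t$, and $y\circ t=\varphi_t^{-1}(y)$. For $(x,s),(y,t)\in Y\times T$ put $(x,s)\to(y,t)$ if there is $p\in T$ with $s=tp$, $p\cdot x$ defined and $p\cdot x=y$. Let $\sim$ be the equivalence relation generated by $\to$, with classes $[x,s]_\sim$. On $(Y\times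 T)/\!\sim$ set $C\ge D$ if there are $(x,s)\in C$ and $(y,s)\in D$ with $x\ge y$ (a preorder). Let $(x,s)\approx(y,t)$ iff $[x,s]_\sim\le[y,t]_\sim$ and $[y,t]_\sim\le[x,s]_\sim$. *)

theory Defs
  imports Main
begin

text \<open>A left partial action of T = A* on Y is a map
  act :: 'a list => 'y => 'y option, where act t y = Some z means that t . y is defined
  and equals z.\<close>

definition order_ideal :: "'y::order set \<Rightarrow> bool" where
  "order_ideal S \<longleftrightarrow> (\<forall>x\<in>S. \<forall>y. y \<le> x \<longrightarrow> y \<in> S)"

definition pdom :: "('a list \<Rightarrow> 'y \<Rightarrow> 'y option) \<Rightarrow> 'a list \<Rightarrow> 'y set" where
  "pdom act t = {y. act t y \<noteq> None}"

definition pran :: "('a list \<Rightarrow> 'y \<Rightarrow> 'y option) \<Rightarrow> 'a list \<Rightarrow> 'y set" where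
  "pran act t = {z. \<exists>y. act t y = Some z}"

definition left_partial_action :: "('a list \<Rightarrow> 'y \<Rightarrow> 'y option) \<Rightarrow> bool" where
  "left_partial_action act \<longleftrightarrow>
     (\<forall>y. act [] y = Some y) \<and>
     (\<forall>s t y z w. act t y = Some z \<longrightarrow> act s z = Some w \<longrightarrow> act (s @ t) y = Some w)"

definition axioms_ABC :: "('a list \<Rightarrow> 'y::semilattice_inf \<Rightarrow> 'y option) \<Rightarrow> bool" where
  "axioms_ABC act \<longleftrightarrow>
     (\<forall>t. order_ideal (pdom act t) \<and> order_ideal (pran act t)) \<and>
     (\<forall>t. bij_betw (\<lambda>y. the (act t y)) (pdom act t) (pran act t) \<and>
          (\<forall>x\<in>pdom act t. \<forall>y\<in>pdom act t. x \<le> y \<longleftrightarrow> the (act t x) \<le> the (act t y))) \<and>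
     (\<forall>t. pdom act t \<noteq> {})"

definition partially_defined_action :: "('a list \<Rightarrow> 'y \<Rightarrow> 'y option) \<Rightarrow> bool" where
  "partially_defined_action act \<longleftrightarrow>
     (\<forall>s t x. act (s @ t) x \<noteq> None \<longleftrightarrow>
        (\<exists>z. act t x = Some z \<and> act s z \<noteq> None))"

definition rev_act :: "('a list \<Rightarrow> 'y \<Rightarrow> 'y option) \<Rightarrow> 'y \<Rightarrow> 'a list \<Rightarrow> 'y option" where
  "rev_act act y t = (if y \<in> pran act t then Some (THE x. act t x = Some y) else None)"

definition step_rel :: "('a list \<Rightarrow> 'y \<Rightarrow> 'y option) \<Rightarrow> 'y \<times> 'a list \<Rightarrow> 'y \<times> 'a list \<Rightarrow> bool" where
  "step_rel act P Q \<longleftrightarrow> (\<exists>p. snd P = snd Q @ p \<and> act p (fst P) = Some (fst Q))"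

definition sim :: "('a list \<Rightarrow> 'y \<Rightarrow> 'y option) \<Rightarrow> 'y \<times> 'a list \<Rightarrow> 'y \<times> 'a list \<Rightarrow> bool" where
  "sim act = equivclp (step_rel act)"

definition cls_ge :: "('a list \<Rightarrow> 'y::order \<Rightarrow> 'y option) \<Rightarrow> 'y \<times> 'a list \<Rightarrow> 'y \<times> 'a list \<Rightarrow> bool" where
  "cls_ge act P Q \<longleftrightarrow> (\<exists>x y s. sim act (x, s) P \<and> sim act (y, s) Q \<and> y \<le> x)"

definition approx :: "('a list \<Rightarrow> 'y::order \<Rightarrow> 'y option) \<Rightarrow> 'y \<times> 'a list \<Rightarrow> 'y \<times> 'a list \<Rightarrow> bool" where
  "approx act P Q \<longleftrightarrow> cls_ge act Q P \<and> cls_ge act P Q"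

definition canonical :: "('a list \<Rightarrow> 'y \<Rightarrow> 'y option) \<Rightarrow> 'y \<times> 'a list \<Rightarrow> bool" where
  "canonical act P \<longleftrightarrow> length (snd P) = (LEAST n. \<exists>Q. sim act Q P \<and> n = length (snd Q))"

end

theory Submission
  imports Defs
begin

text \<open>Reduce a pair (x, s) by letting the longest possible suffix p of s = w p act on x.
  Because the action is partially defined, two reductions of the same pair are always
  related by a further reduction step, so a pair with no final letter acting (a reduced
  pair) is reached from (x, s) in exactly one way. This reduct is constant along \<open>\<rightarrow>\<close>,
  hence a complete invariant of \<open>\<sim>\<close>, and it is the element of minimal word length in its
  class. For \<open>\<approx>\<close>: since domains are order ideals and the maps are monotone, \<open>C \<ge> D\<close>
  yields a reduction step from (y, w) to the reduct of D with y below the element of the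
  reduct (x, w) of C; comparing word lengths in both directions forces the two reducts to
  share their word, and then antisymmetry identifies their elements.\<close>

definition reduced :: "('a list \<Rightarrow> 'y \<Rightarrow> 'y option) \<Rightarrow> 'y \<times> 'a list \<Rightarrow> bool" where
  "reduced act P \<longleftrightarrow> (\<forall>w a. snd P = w @ [a] \<longrightarrow> act [a] (fst P) = None)"

definition reduct :: "('a list \<Rightarrow> 'y \<Rightarrow> 'y option) \<Rightarrow> 'y \<times> 'a list \<Rightarrow> 'y \<times> 'a list" where
  "reduct act P = (THE Q. step_rel act P Q \<and> reduced act Q)"

lemma step_rel_length_le: "step_rel act P Q \<Longrightarrow> length (snd Q) \<le> length (snd P)"
  unfolding step_rel_def by auto

lemma axioms_ABC_act_mono:
  assumes "axioms_ABC act" "act p x = Some x'" "y \<le> x"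
  shows "\<exists>y'. act p y = Some y' \<and> y' \<le> x'"
proof -
  have x: "x \<in> pdom act p" using assms(2) unfolding pdom_def by auto
  moreover have "order_ideal (pdom act p)" using assms(1) unfolding axioms_ABC_def by blast
  ultimately have y: "y \<in> pdom act p" using assms(3) unfolding order_ideal_def by blast
  then obtain y' where "act p y = Some y'" unfolding pdom_def by auto
  moreover have "the (act p y) \<le> the (act p x)"
    using assms(1) x y assms(3) unfolding axioms_ABC_def by blast
  ultimately show ?thesis using assms(2) by auto
qed

lemma axioms_ABC_rev_act:
  assumes "axioms_ABC act" "act t y = Some x"
  shows "rev_act act x t = Some y"
proof -
  have "inj_on (\<lambda>y. the (act t y)) (pdom act t)"
    using assms(1) bij_betw_imp_inj_on unfolding axioms_ABC_def by blast
  then have "(THE z. act t z = Some x) = y"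
    using assms(2) unfolding inj_on_def pdom_def by (intro the_equality) force+
  moreover have "x \<in> pran act t" using assms(2) unfolding pran_def by auto
  ultimately show ?thesis unfolding rev_act_def by simp
qed

locale word_action =
  fixes act :: "'a list \<Rightarrow> 'y \<Rightarrow> 'y option"
  assumes left_partial: "left_partial_action act"
    and partially_defined: "partially_defined_action act"
begin

lemma act_Nil [simp]: "act [] x = Some x"
  using left_partial unfolding left_partial_action_def by blast

lemma act_append: "act t x = Some z \<Longrightarrow> act s z = Some v \<Longrightarrow> act (s @ t) x = Some v"
  using left_partial unfolding left_partial_action_def by blast

lemma act_append_split:
  assumes "act (s @ t) x = Some v"
  obtains z where "act t x = Some z" "act s z = Some v"
proof -
  from assms partially_defined obtain z v' where "act t x = Some z" "act s z = Some v'"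
    unfolding partially_defined_action_def by fastforce
  with act_append[of t x z s v'] assms that show ?thesis by simp
qed

lemma step_rel_refl: "step_rel act P P"
  unfolding step_rel_def by auto

lemma step_rel_trans: "step_rel act P Q \<Longrightarrow> step_rel act Q R \<Longrightarrow> step_rel act P R"
  unfolding step_rel_def by (metis act_append append.assoc)

lemma step_rel_length_eq: "step_rel act P Q \<Longrightarrow> length (snd Q) = length (snd P) \<Longrightarrow> Q = P"
  unfolding step_rel_def by (cases P; cases Q) auto

lemma step_rel_linear:
  assumes "step_rel act P Q" "step_rel act P R"
  shows "step_rel act Q R \<or> step_rel act R Q"
proof -
  have one_way: "step_rel act Q R"
    if "snd P = snd Q @ p" "act p (fst P) = Some (fst Q)" "act (us @ p) (fst P) = Some (fst R)"
      "snd Q = snd R @ us"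
    for P Q R :: "'y \<times> 'a list" and p us
  proof -
    from that(3) obtain z where "act p (fst P) = Some z" "act us z = Some (fst R)"
      by (rule act_append_split)
    with that show ?thesis unfolding step_rel_def by auto
  qed
  from assms obtain p q where p: "snd P = snd Q @ p" "act p (fst P) = Some (fst Q)"
    and q: "snd P = snd R @ q" "act q (fst P) = Some (fst R)"
    unfolding step_rel_def by auto
  from p(1) q(1) have "snd Q @ p = snd R @ q" by simp
  then obtain us where "snd Q = snd R @ us \<and> us @ p = q \<or> snd Q @ us = snd R \<and> p = us @ q"
    unfolding append_eq_append_conv2 by blast
  then show ?thesis using one_way p q by metis
qed

lemma reduced_step_rel: "reduced act Q \<Longrightarrow> step_rel act Q R \<Longrightarrow> R = Q"
proof -
  assume red: "reduced act Q" and step: "step_rel act Q R"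
  then obtain p where p: "snd Q = snd R @ p" "act p (fst Q) = Some (fst R)"
    unfolding step_rel_def by auto
  have "p = []"
  proof (cases p rule: rev_exhaust)
    case (snoc p' a)
    with p(2) obtain z where "act [a] (fst Q) = Some z" by (metis act_append_split)
    with red p(1) snoc show ?thesis unfolding reduced_def by (metis append_assoc option.distinct(1))
  qed
  with step p(1) show "R = Q" using step_rel_length_eq by simp
qed

lemma reduced_reachable: "\<exists>Q. step_rel act P Q \<and> reduced act Q"
proof (induction "length (snd P)" arbitrary: P rule: less_induct)
  case less
  obtain x s where P: "P = (x, s)" by fastforce
  show ?case
  proof (cases "\<exists>s' a x'. s = s' @ [a] \<and> act [a] x = Some x'")
    case True
    then obtain s' a x' where s: "s = s' @ [a]" and x': "act [a] x = Some x'" by blast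
    from less[of "(x', s')"] s P obtain Q where "step_rel act (x', s') Q" "reduced act Q" by auto
    moreover have "step_rel act (x, s) (x', s')" using s x' unfolding step_rel_def by auto
    ultimately show ?thesis using P step_rel_trans by blast
  next
    case False
    then have "reduced act P" unfolding P reduced_def by auto
    then show ?thesis using step_rel_refl by blast
  qed
qed

lemma step_rel_reduct_reduced: "step_rel act P (reduct act P) \<and> reduced act (reduct act P)"
proof -
  from reduced_reachable obtain Q where Q: "step_rel act P Q" "reduced act Q" by blast
  have "R = Q" if "step_rel act P R \<and> reduced act R" for R
    using that Q step_rel_linear reduced_step_rel by metis
  with Q show ?thesis unfolding reduct_def by (metis (mono_tags, lifting) theI)
qed

lemmas step_rel_reduct = step_rel_reduct_reduced[THEN conjunct1]
lemmas reduced_reduct = step_rel_reduct_reduced[THEN conjunct2]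

lemma reduct_eqI: "step_rel act P Q \<Longrightarrow> reduced act Q \<Longrightarrow> reduct act P = Q"
  using step_rel_reduct reduced_reduct step_rel_linear reduced_step_rel by metis

lemma reduct_eq_if_step_rel: "step_rel act P R \<Longrightarrow> reduct act P = reduct act R"
  using step_rel_reduct reduced_reduct reduct_eqI step_rel_trans by metis

lemma sim_iff_reduct_eq: "sim act P Q \<longleftrightarrow> reduct act P = reduct act Q"
proof
  show "sim act P Q \<Longrightarrow> reduct act P = reduct act Q"
    unfolding sim_def by (induction rule: equivclp_induct) (auto dest: reduct_eq_if_step_rel)
next
  have to_reduct: "sim act R (reduct act R)" for R
    unfolding sim_def using step_rel_reduct by (rule r_into_equivclp)
  show "reduct act P = reduct act Q \<Longrightarrow> sim act P Q"
    using to_reduct[of P] to_reduct[of Q] unfolding sim_def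
    by (metis equivclp_sym equivclp_trans)
qed

lemma reduct_reduct [simp]: "reduct act (reduct act P) = reduct act P"
  using step_rel_reduct reduced_reduct reduct_eqI step_rel_refl by metis

lemma canonical_iff_reduct_eq: "canonical act P \<longleftrightarrow> reduct act P = P"
proof -
  have "(LEAST n. \<exists>Q. sim act Q P \<and> n = length (snd Q)) = length (snd (reduct act P))"
  proof (rule Least_equality)
    show "\<exists>Q. sim act Q P \<and> length (snd (reduct act P)) = length (snd Q)"
      by (rule exI[of _ "reduct act P"]) (simp add: sim_iff_reduct_eq)
  next
    fix n assume "\<exists>Q. sim act Q P \<and> n = length (snd Q)"
    then show "length (snd (reduct act P)) \<le> n"
      using step_rel_reduct step_rel_length_le by (metis sim_iff_reduct_eq)
  qed
  then show ?thesis
    unfolding canonical_def using step_rel_reduct step_rel_length_eq by metis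
qed

lemma canonical_unique: "\<exists>!P. sim act P B \<and> canonical act P"
  by (rule ex1I[of _ "reduct act B"]) (auto simp: sim_iff_reduct_eq canonical_iff_reduct_eq)

lemma step_rel_to_canonical: "canonical act Q \<Longrightarrow> sim act P Q \<Longrightarrow> step_rel act P Q"
  by (metis canonical_iff_reduct_eq step_rel_reduct sim_iff_reduct_eq)

end

locale word_action_ABC = word_action act
  for act :: "'a list \<Rightarrow> 'y::semilattice_inf \<Rightarrow> 'y option" +
  assumes ABC: "axioms_ABC act"
begin

lemma sim_imp_approx: "sim act P Q \<Longrightarrow> approx act P Q"
  unfolding approx_def cls_ge_def sim_def
  by (metis equivclp_refl order_refl prod.collapse)

lemma step_rel_mono:
  assumes "step_rel act (x, s) (x', w)" "y \<le> x"
  obtains y' where "y' \<le> x'" "step_rel act (y, s) (y', w)"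
  using assms axioms_ABC_act_mono[OF ABC] unfolding step_rel_def by fastforce

lemma cls_ge_reduct:
  assumes "cls_ge act P Q" "reduct act P = (x, w)"
  obtains y where "y \<le> x" "step_rel act (y, w) (reduct act Q)"
proof -
  from assms(1) obtain x0 y0 s where "sim act (x0, s) P" "sim act (y0, s) Q" "y0 \<le> x0"
    unfolding cls_ge_def by auto
  then have "step_rel act (x0, s) (x, w)" "reduct act (y0, s) = reduct act Q"
    using step_rel_reduct[of "(x0, s)"] assms(2) by (simp_all add: sim_iff_reduct_eq)
  then obtain y where "y \<le> x" "step_rel act (y0, s) (y, w)"
    using step_rel_mono \<open>y0 \<le> x0\<close> by metis
  with \<open>reduct act (y0, s) = reduct act Q\<close> that show thesis
    by (metis step_rel_reduct reduct_eq_if_step_rel)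
qed

lemma approx_imp_sim:
  assumes "approx act P Q"
  shows "sim act P Q"
proof -
  obtain x w y v where P: "reduct act P = (x, w)" and Q: "reduct act Q = (y, v)"
    by fastforce
  from assms obtain y' x' where
    y': "y' \<le> x" "step_rel act (y', w) (y, v)" and x': "x' \<le> y" "step_rel act (x', v) (x, w)"
    unfolding approx_def by (metis P Q cls_ge_reduct)
  have "length v = length w"
    using step_rel_length_le[OF y'(2)] step_rel_length_le[OF x'(2)] by simp
  with y' x' have "y' = y" "x' = x" "v = w" using step_rel_length_eq by fastforce+
  with y' x' have "(x, w) = (y, v)" by auto
  then show ?thesis using P Q sim_iff_reduct_eq by simp
qed

end

theorem lemma5p2:
  fixes act :: "'a list \<Rightarrow> 'y::semilattice_inf \<Rightarrow> 'y option"
  assumes "left_partial_action act"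
    and "axioms_ABC act"
    and "partially_defined_action act"
  shows "(\<forall>B. \<exists>!P. sim act P B \<and> canonical act P)
       \<and> (\<forall>x w y u. canonical act (x, w) \<longrightarrow> sim act (y, u) (x, w) \<longrightarrow>
            (\<exists>t. rev_act act x t = Some y \<and> u = w @ t))
       \<and> sim act = approx act"
proof -
  interpret word_action_ABC act
    using assms by unfold_locales
  have "\<exists>t. rev_act act x t = Some y \<and> u = w @ t"
    if "canonical act (x, w)" "sim act (y, u) (x, w)" for x w y u
    using step_rel_to_canonical[OF that] axioms_ABC_rev_act[OF assms(2)]
    unfolding step_rel_def by auto
  moreover have "sim act = approx act"
    using sim_imp_approx approx_imp_sim by blast
  ultimately show ?thesis using canonical_unique by blast
qed

end
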